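(* Let $B$ be a finite set and consider the monoid $J(\emptyset,B)$. Let $X_n$, $n\in\mathbb{N}$, be pointed $J(\emptyset,B)$-sets, and let $E$ be a right ideal in $\langle(X_n)\rangle$ such that $\langle(X_n)\rangle$ is $E$-directed. Then for each coloring of $\langle(X_n)\rangle$ with finitely many colors there exists a basic double sequence $(v_i,v'_i)$ in $\langle(X_n)\rangle$ such that each $v_i$ has as an entry the distinguished point of some $X_n$, $v'_i\in E$ for each $i$, and the coloring is constant on all elements of the form $b_0(v_{i_0})b'_0(v'_{j_0})b_1(v_{i_1})b'_1(v'_{j_1})\cdots b_n(v_{i_n})$ with $b_0,b'_0,b_1,b'_1,\dots,b_n\in B$ and $i_0\le j_0<i_1\le j_1<\cdots<i_n$.
   Context: $J(\emptyset,B)=\{1\}\cup B$ ($1\notin B$) is the monoid with identity $1$ and $c\cdot b=b$ for all $c\in J(\emptyset,B)$, $b\in B$. Monoid actions have the identity acting as the identity. A pointed $M$-set is a set $X$ with an $M$-action and a distinguished point $x$ with $Mx=X$. For a sequence of sets $(X_n)$, $\langle(X_n)\rangle$ is the set of finite sequences $x_1\cdots x_k$ ($k\in\mathbb{N}$) such that there are $m_1<\cdots<m_k$ with $x_i\in X_{m_i}$; it is a partial semigroup: the product of $x_1\cdots x_k$ and $y_1\cdots y_l$ is defined iff there are $m_1<\cdots<m_k<n_1<\cdots<n_l$ with $x_i\in X_{m_i}$, $y_j\in X_{n_j}$, and equals the concatenation. $M$ acts by $a(x_1\cdots x_k)=a(x_1)\cdots a(x_k)$. A right ideal in $\langle(X_n)\rangle$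 is a non-empty $E$ with $wu\in E$ whenever $w\in E$ and $wu$ is defined; $\langle(X_n)\rangle$ is $E$-directed if for all $u_1,\dots,u_n$ there is $u\in E$ with all $u_iu$ defined. A double sequence $(v_i,v'_i)$ is basic if the single sequence $v_0,v'_0,v_1,v'_1,\dots$ is basic, i.e. the product of any finite subsequence taken in order is defined. *)

theory Defs
  imports Main
begin

text \<open>Elements of J(empty,B) are encoded as 'b option: None is the identity 1,
  Some b is the element b of B. The carrier is None together with Some ` B.\<close>

definition Jcarrier :: "'b set \<Rightarrow> 'b option set" where
  "Jcarrier B = insert None (Some ` B)"

definition jmult :: "'b option \<Rightarrow> 'b option \<Rightarrow> 'b option" where
  "jmult a c = (case c of None \<Rightarrow> a | Some b \<Rightarrow> Some b)"

definition is_J_action :: "'b set \<Rightarrow> 'x set \<Rightarrow> ('b option \<Rightarrow> 'x \<Rightarrow> 'x) \<Rightarrow> bool" where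
  "is_J_action B X act \<longleftrightarrow>
     (\<forall>a\<in>Jcarrier B. \<forall>x\<in>X. act a x \<in> X) \<and>
     (\<forall>x\<in>X. act None x = x) \<and>
     (\<forall>a\<in>Jcarrier B. \<forall>c\<in>Jcarrier B. \<forall>x\<in>X. act a (act c x) = act (jmult a c) x)"

definition pointed_J_set :: "'b set \<Rightarrow> 'x set \<Rightarrow> ('b option \<Rightarrow> 'x \<Rightarrow> 'x) \<Rightarrow> 'x \<Rightarrow> bool" where
  "pointed_J_set B X act p \<longleftrightarrow>
     is_J_action B X act \<and> p \<in> X \<and> (\<lambda>a. act a p) ` Jcarrier B = X"

text \<open>An entry x_i of X_(m_i) is recorded together with its index m_i
  (i.e. the X_n are treated as pairwise disjoint). A word is a nonempty list of
  tagged entries with strictly increasing tags.\<close>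

type_synonym 'x word = "(nat \<times> 'x) list"

definition FIN :: "(nat \<Rightarrow> 'x set) \<Rightarrow> 'x word set" where
  "FIN X = {w. w \<noteq> [] \<and> sorted_wrt (<) (map fst w) \<and> (\<forall>(m, x)\<in>set w. x \<in> X m)}"

definition pdefined :: "(nat \<Rightarrow> 'x set) \<Rightarrow> 'x word \<Rightarrow> 'x word \<Rightarrow> bool" where
  "pdefined X u w \<longleftrightarrow> u \<in> FIN X \<and> w \<in> FIN X \<and> fst (last u) < fst (hd w)"

fun prodl :: "(nat \<Rightarrow> 'x set) \<Rightarrow> 'x word list \<Rightarrow> 'x word option" where
  "prodl X [] = None"
| "prodl X [w] = (if w \<in> FIN X then Some w else None)"
| "prodl X (w # v # ws) =
     (case prodl X (v # ws) of None \<Rightarrow> None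
      | Some u \<Rightarrow> (if pdefined X w u then Some (w @ u) else None))"

definition wact :: "(nat \<Rightarrow> 'b option \<Rightarrow> 'x \<Rightarrow> 'x) \<Rightarrow> 'b option \<Rightarrow> 'x word \<Rightarrow> 'x word" where
  "wact act a w = map (\<lambda>(m, x). (m, act m a x)) w"

definition right_ideal :: "(nat \<Rightarrow> 'x set) \<Rightarrow> 'x word set \<Rightarrow> bool" where
  "right_ideal X E \<longleftrightarrow> E \<noteq> {} \<and> E \<subseteq> FIN X \<and>
     (\<forall>w\<in>E. \<forall>u. pdefined X w u \<longrightarrow> w @ u \<in> E)"

definition E_directed :: "(nat \<Rightarrow> 'x set) \<Rightarrow> 'x word set \<Rightarrow> bool" where
  "E_directed X E \<longleftrightarrow>
     (\<forall>U. finite U \<and> U \<subseteq> FIN X \<longrightarrow> (\<exists>u\<in>E. \<forall>w\<in>U. pdefined X w u))"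

definition basic :: "(nat \<Rightarrow> 'x set) \<Rightarrow> (nat \<Rightarrow> 'x word) \<Rightarrow> bool" where
  "basic X s \<longleftrightarrow> (\<forall>ks. ks \<noteq> [] \<and> sorted_wrt (<) ks \<longrightarrow> prodl X (map s ks) \<noteq> None)"

text \<open>The double sequence (v_i, v'_i) as the single sequence v_0, v'_0, v_1, v'_1, ...\<close>
definition interleave :: "(nat \<Rightarrow> 'a) \<Rightarrow> (nat \<Rightarrow> 'a) \<Rightarrow> nat \<Rightarrow> 'a" where
  "interleave v v' k = (if even k then v (k div 2) else v' (k div 2))"

definition basic_double :: "(nat \<Rightarrow> 'x set) \<Rightarrow> (nat \<Rightarrow> 'x word) \<Rightarrow> (nat \<Rightarrow> 'x word) \<Rightarrow> bool" where
  "basic_double X v v' \<longleftrightarrow> basic X (interleave v v')"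

definition pattern_word ::
  "(nat \<Rightarrow> 'b option \<Rightarrow> 'x \<Rightarrow> 'x) \<Rightarrow> (nat \<Rightarrow> 'x word) \<Rightarrow> (nat \<Rightarrow> 'x word) \<Rightarrow> nat
     \<Rightarrow> (nat \<Rightarrow> nat) \<Rightarrow> (nat \<Rightarrow> nat) \<Rightarrow> (nat \<Rightarrow> 'b) \<Rightarrow> (nat \<Rightarrow> 'b) \<Rightarrow> 'x word" where
  "pattern_word act v v' n is js bs bs' =
     concat (map (\<lambda>k. wact act (Some (bs k)) (v (is k)) @ wact act (Some (bs' k)) (v' (js k))) [0..<n])
     @ wact act (Some (bs n)) (v (is n))"

end

(*
  The proof runs in the Stone-Cech compactification of the partial semigroup of words, i.e.
  in the compact right topological semigroup of cofinal ultrafilters.  Each b in B acts on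
  words as a retraction onto the words fixed by J, and extends to a homomorphism on
  ultrafilters.  Take a minimal idempotent F among the ultrafilters concentrated on fixed words,
  an idempotent U on words through distinguished points with F U = U = U F, and an idempotent
  U' on E with U' F = U'.  Minimality of F forces b(U) = F and F b(U') F = F for every b in B.
  The colour class A in F is then hit by all pattern words: one chooses v_0, v'_0, v_1, ...
  alternately, v_i U-generic and v'_i U'-generic with respect to the finitely many left
  quotients of A produced so far, so that b(v_i) stays in F-large sets and b'(v'_j) keeps
  their left quotients F-large.
*)

theory Submission
  imports Defs
begin

section \<open>Ultrafilters\<close>

definition ultrafilter :: "'a set set \<Rightarrow> bool" where
  "ultrafilter W \<longleftrightarrow> (\<forall>S T. S \<in> W \<and> S \<subseteq> T \<longrightarrow> T \<in> W) \<and> (\<forall>S T. S \<in> W \<and> T \<in> W \<longrightarrow> S \<inter> T \<in> W)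
     \<and> {} \<notin> W \<and> (\<forall>S. S \<in> W \<or> -S \<in> W)"

definition finite_intersection_property :: "'a set set \<Rightarrow> bool" where
  "finite_intersection_property G \<longleftrightarrow> (\<forall>S. finite S \<and> S \<subseteq> G \<longrightarrow> \<Inter>S \<noteq> {})"

lemma ultrafilter_mono: "ultrafilter W \<Longrightarrow> S \<in> W \<Longrightarrow> S \<subseteq> T \<Longrightarrow> T \<in> W"
  unfolding ultrafilter_def by blast

lemma ultrafilter_Int: "ultrafilter W \<Longrightarrow> S \<in> W \<Longrightarrow> T \<in> W \<Longrightarrow> S \<inter> T \<in> W"
  unfolding ultrafilter_def by blast

lemma ultrafilter_empty: "ultrafilter W \<Longrightarrow> {} \<notin> W"
  unfolding ultrafilter_def by blast

lemma ultrafilter_Compl: "ultrafilter W \<Longrightarrow> S \<notin> W \<Longrightarrow> -S \<in> W"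
  unfolding ultrafilter_def by blast

lemma ultrafilter_nonempty: "ultrafilter W \<Longrightarrow> S \<in> W \<Longrightarrow> S \<noteq> {}"
  unfolding ultrafilter_def by blast

lemma ultrafilter_UNIV: "ultrafilter W \<Longrightarrow> UNIV \<in> W"
  unfolding ultrafilter_def by (metis Compl_empty_eq)

lemma ultrafilter_not_Compl: "ultrafilter W \<Longrightarrow> S \<in> W \<Longrightarrow> -S \<in> W \<Longrightarrow> False"
  using ultrafilter_Int ultrafilter_empty by fastforce

lemma ultrafilter_eqI:
  assumes "ultrafilter U" "ultrafilter V" "U \<subseteq> V"
  shows "U = V"
  using assms ultrafilter_Compl ultrafilter_not_Compl by (metis subsetI subset_antisym subsetD)

lemma ultrafilter_cong:
  assumes "ultrafilter W" "Z \<in> W" "S \<inter> Z = T \<inter> Z"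
  shows "S \<in> W \<longleftrightarrow> T \<in> W"
  using ultrafilter_Int[OF assms(1) _ assms(2)] ultrafilter_mono[OF assms(1)] assms(3)
  by (metis inf_le1)

lemma ultrafilter_INT:
  assumes "ultrafilter W" "finite I" "\<And>i. i \<in> I \<Longrightarrow> f i \<in> W"
  shows "(\<Inter>i\<in>I. f i) \<in> W"
  using assms(2,3)
  by (induction I rule: finite_induct) (auto simp: ultrafilter_UNIV[OF assms(1)] ultrafilter_Int[OF assms(1)])

lemma ultrafilter_Inter: "ultrafilter W \<Longrightarrow> finite S \<Longrightarrow> S \<subseteq> W \<Longrightarrow> \<Inter>S \<in> W"
  using ultrafilter_INT[of W S id] by auto

lemma ultrafilter_UN_lessThan:
  assumes W: "ultrafilter W" and "(\<Union>i<(r::nat). f i) \<in> W"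
  shows "\<exists>i<r. f i \<in> W"
proof (rule ccontr)
  assume "\<not> ?thesis"
  then have "(\<Inter>i<r. - f i) \<in> W"
    by (intro ultrafilter_INT[OF W]) (auto intro: ultrafilter_Compl[OF W])
  moreover have "(\<Inter>i<r. - f i) = - (\<Union>i<r. f i)" by auto
  ultimately show False using assms ultrafilter_not_Compl by metis
qed

lemma ultrafilter_finite_colouring:
  assumes W: "ultrafilter W" and "Z \<in> W" and "\<And>w. w \<in> Z \<Longrightarrow> c w < (r::nat)"
  shows "\<exists>col. {w \<in> Z. c w = col} \<in> W"
proof -
  have "Z \<subseteq> (\<Union>i<r. {w \<in> Z. c w = i})" using assms(3) by blast
  then show ?thesis
    using ultrafilter_UN_lessThan[OF W] ultrafilter_mono[OF W assms(2)] by meson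
qed

lemma ultrafilter_vimage:
  assumes U: "ultrafilter U" and Z: "Z \<in> U"
    and mono: "\<And>S T. S \<subseteq> T \<Longrightarrow> f S \<subseteq> f T"
    and Int: "\<And>S T. f S \<inter> f T \<subseteq> f (S \<inter> T)"
    and empty: "f {} \<notin> U"
    and Compl: "\<And>S. Z - f S \<subseteq> f (-S)"
  shows "ultrafilter {A. f A \<in> U}"
  unfolding ultrafilter_def mem_Collect_eq
proof (intro conjI allI impI)
  show "f T \<in> U" if "f S \<in> U \<and> S \<subseteq> T" for S T
    using that mono ultrafilter_mono[OF U] by metis
  show "f (S \<inter> T) \<in> U" if "f S \<in> U \<and> f T \<in> U" for S T
    using that Int ultrafilter_Int[OF U] ultrafilter_mono[OF U] by metis
  show "f {} \<notin> U" by (fact empty)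
  show "f S \<in> U \<or> f (- S) \<in> U" for S
  proof (cases "f S \<in> U")
    case False
    then have "Z \<inter> - f S \<in> U"
      using ultrafilter_Compl[OF U] ultrafilter_Int[OF U Z] by blast
    then show ?thesis using Compl[of S] ultrafilter_mono[OF U] by (metis Diff_eq)
  qed simp
qed

lemma finite_intersection_property_insert:
  assumes "finite_intersection_property G" "\<And>T. finite T \<Longrightarrow> T \<subseteq> G \<Longrightarrow> \<Inter>T \<inter> S \<noteq> {}"
  shows "finite_intersection_property (insert S G)"
  unfolding finite_intersection_property_def
proof (intro allI impI)
  fix T assume T: "finite T \<and> T \<subseteq> insert S G"
  show "\<Inter>T \<noteq> {}"
  proof (cases "S \<in> T")
    case True
    then have "\<Inter>T = \<Inter>(T - {S}) \<inter> S" by auto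
    then show ?thesis using assms(2)[of "T - {S}"] T by auto
  next
    case False
    then show ?thesis using assms(1) T unfolding finite_intersection_property_def by blast
  qed
qed

lemma not_finite_intersection_property_insert:
  assumes "\<not> finite_intersection_property (insert S G)"
  obtains T where "finite T" "T \<subseteq> G" "\<Inter>T \<inter> S = {}"
proof -
  obtain T where T: "finite T" "T \<subseteq> insert S G" "\<Inter>T = {}"
    using assms unfolding finite_intersection_property_def by blast
  have "\<Inter>(T - {S}) \<inter> S \<subseteq> \<Inter>T" by auto
  then show thesis using T that[of "T - {S}"] by auto
qed

lemma finite_intersection_property_maximal_exists:
  assumes "finite_intersection_property A"
  shows "\<exists>G. A \<subseteq> G \<and> finite_intersection_property G
    \<and> (\<forall>S. finite_intersection_property (insert S G) \<longrightarrow> S \<in> G)"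
proof -
  let ?\<Phi> = "{G. A \<subseteq> G \<and> finite_intersection_property G}"
  have "\<exists>M\<in>?\<Phi>. \<forall>G\<in>?\<Phi>. M \<subseteq> G \<longrightarrow> G = M"
  proof (rule subset_Zorn_nonempty)
    show "?\<Phi> \<noteq> {}" using assms by auto
    fix C assume C: "C \<noteq> {}" "subset.chain ?\<Phi> C"
    have "finite_intersection_property (\<Union>C)" unfolding finite_intersection_property_def
    proof (intro allI impI)
      fix S assume S: "finite S \<and> S \<subseteq> \<Union>C"
      then obtain G where "G \<in> C" "S \<subseteq> G" using finite_subset_Union_chain[OF _ _ C] by blast
      then show "\<Inter>S \<noteq> {}"
        using C(2) S unfolding subset_chain_def finite_intersection_property_def by blast
    qed
    moreover have "A \<subseteq> \<Union>C" using C unfolding subset_chain_def by blast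
    ultimately show "\<Union>C \<in> ?\<Phi>" by auto
  qed
  then obtain G where G: "A \<subseteq> G" "finite_intersection_property G"
    and G_max: "\<And>H. A \<subseteq> H \<Longrightarrow> finite_intersection_property H \<Longrightarrow> G \<subseteq> H \<Longrightarrow> H = G"
    by auto
  have "S \<in> G" if "finite_intersection_property (insert S G)" for S
    using G_max[of "insert S G"] that G(1) by auto
  then show ?thesis using G by blast
qed

lemma ultrafilter_if_finite_intersection_property_maximal:
  assumes G: "finite_intersection_property G"
    and max: "\<forall>S. finite_intersection_property (insert S G) \<longrightarrow> S \<in> G"
  shows "ultrafilter G"
proof -
  have fipD: "\<Inter>T \<noteq> {}" if "finite T" "T \<subseteq> G" for T
    using G that unfolding finite_intersection_property_def by blast
  show ?thesis
    unfolding ultrafilter_def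
  proof (intro conjI allI impI)
    fix S T assume ST: "S \<in> G \<and> S \<subseteq> T"
    show "T \<in> G"
    proof (intro max[rule_format] finite_intersection_property_insert[OF G])
      fix R assume "finite R" "R \<subseteq> G"
      then have "\<Inter>(insert S R) \<noteq> {}" using ST by (intro fipD) auto
      then show "\<Inter>R \<inter> T \<noteq> {}" using ST by auto
    qed
  next
    fix S T assume ST: "S \<in> G \<and> T \<in> G"
    show "S \<inter> T \<in> G"
    proof (intro max[rule_format] finite_intersection_property_insert[OF G])
      fix R assume "finite R" "R \<subseteq> G"
      then have "\<Inter>(insert S (insert T R)) \<noteq> {}" using ST by (intro fipD) auto
      then show "\<Inter>R \<inter> (S \<inter> T) \<noteq> {}" by auto
    qed
  next
    show "{} \<notin> G" using fipD[of "{{}}"] by blast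
  next
    fix S
    show "S \<in> G \<or> -S \<in> G"
    proof (rule ccontr)
      assume "\<not> (S \<in> G \<or> -S \<in> G)"
      then have "\<not> finite_intersection_property (insert S G)"
        "\<not> finite_intersection_property (insert (-S) G)" using max by auto
      then obtain T1 T2 where "finite T1" "T1 \<subseteq> G" "\<Inter>T1 \<inter> S = {}"
        and "finite T2" "T2 \<subseteq> G" "\<Inter>T2 \<inter> -S = {}"
        by (elim not_finite_intersection_property_insert)
      moreover have "\<Inter>(T1 \<union> T2) \<subseteq> (\<Inter>T1 \<inter> S) \<union> (\<Inter>T2 \<inter> -S)" by auto
      ultimately show False using fipD[of "T1 \<union> T2"] by auto
    qed
  qed
qed

lemma ultrafilter_exists:
  assumes "finite_intersection_property A"
  obtains W where "ultrafilter W" "A \<subseteq> W"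
  using finite_intersection_property_maximal_exists[OF assms]
    ultrafilter_if_finite_intersection_property_maximal by blast

lemma subset_Zorn_minimal:
  assumes "\<A> \<noteq> {}" and ch: "\<And>\<C>. \<C> \<noteq> {} \<Longrightarrow> subset.chain \<A> \<C> \<Longrightarrow> \<Inter>\<C> \<in> \<A>"
  shows "\<exists>M\<in>\<A>. \<forall>D\<in>\<A>. D \<subseteq> M \<longrightarrow> D = M"
proof -
  have "\<exists>M\<in>uminus ` \<A>. \<forall>D\<in>uminus ` \<A>. M \<subseteq> D \<longrightarrow> D = M"
  proof (rule subset_Zorn_nonempty)
    show "uminus ` \<A> \<noteq> {}" using assms(1) by auto
    fix \<C> assume C: "\<C> \<noteq> {}" "subset.chain (uminus ` \<A>) \<C>"
    have "uminus ` \<C> \<subseteq> \<A>" using C(2) unfolding subset_chain_def by auto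
    moreover have "\<forall>D\<in>uminus ` \<C>. \<forall>D'\<in>uminus ` \<C>. D \<subseteq> D' \<or> D' \<subseteq> D"
      using C(2) unfolding subset_chain_def by auto
    ultimately have "\<Inter>(uminus ` \<C>) \<in> \<A>"
      using ch[of "uminus ` \<C>"] C(1) unfolding subset_chain_def by blast
    moreover have "\<Union>\<C> = - \<Inter>(uminus ` \<C>)" by auto
    ultimately show "\<Union>\<C> \<in> uminus ` \<A>" by (metis image_eqI)
  qed
  then obtain M where M: "M \<in> \<A>" "\<forall>D\<in>\<A>. -M \<subseteq> -D \<longrightarrow> -D = -M" by auto
  show ?thesis
  proof (rule bexI[OF _ M(1)], intro ballI impI)
    fix D assume "D \<in> \<A>" "D \<subseteq> M"
    then show "D = M" using M(2) by auto
  qed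
qed

section \<open>Words\<close>

lemma FIN_nonempty: "w \<in> FIN X \<Longrightarrow> w \<noteq> []"
  unfolding FIN_def by auto

lemma FIN_sorted: "w \<in> FIN X \<Longrightarrow> sorted_wrt (<) (map fst w)"
  unfolding FIN_def by auto

lemma FIN_hd_le:
  assumes "w \<in> FIN X" "a \<in> set w"
  shows "fst (hd w) \<le> fst a"
  using assms FIN_sorted[OF assms(1)] by (cases w) auto

lemma FIN_le_last:
  assumes "w \<in> FIN X" "a \<in> set w"
  shows "fst a \<le> fst (last w)"
  using FIN_sorted[OF assms(1)] assms(2)
proof (induction w)
  case (Cons b w)
  then show ?case by (cases "w = []") (auto intro: less_imp_le)
qed simp

lemma FIN_hd_le_last: "w \<in> FIN X \<Longrightarrow> fst (hd w) \<le> fst (last w)"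
  using FIN_hd_le[of w X "last w"] FIN_nonempty[of w X] by simp

lemma pdefined_append_FIN:
  assumes "pdefined X w u"
  shows "w @ u \<in> FIN X"
proof -
  have w: "w \<in> FIN X" and u: "u \<in> FIN X" and lt: "fst (last w) < fst (hd u)"
    using assms unfolding pdefined_def by auto
  have "fst a < fst b" if "a \<in> set w" "b \<in> set u" for a b
    using FIN_le_last[OF w that(1)] FIN_hd_le[OF u that(2)] lt by linarith
  then have "sorted_wrt (<) (map fst (w @ u))"
    using FIN_sorted[OF w] FIN_sorted[OF u] by (auto simp: sorted_wrt_append)
  then show ?thesis using w u unfolding FIN_def by auto
qed

lemma pdefined_hd_append: "pdefined X w u \<Longrightarrow> hd (w @ u) = hd w"
  unfolding pdefined_def using FIN_nonempty[of w X] by auto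

lemma pdefined_last_append: "pdefined X w u \<Longrightarrow> last (w @ u) = last u"
  unfolding pdefined_def using FIN_nonempty[of u X] by auto

lemma pdefined_append_left_iff:
  "pdefined X x y \<Longrightarrow> pdefined X (x @ y) z \<longleftrightarrow> pdefined X y z"
  using pdefined_append_FIN[of X x y] pdefined_last_append[of X x y] unfolding pdefined_def by auto

lemma pdefined_append_right_iff:
  "pdefined X y z \<Longrightarrow> pdefined X x (y @ z) \<longleftrightarrow> pdefined X x y"
  using pdefined_append_FIN[of X y z] pdefined_hd_append[of X y z] unfolding pdefined_def by auto

lemma prodl_concat:
  assumes "ws \<noteq> []" "\<forall>w\<in>set ws. w \<in> FIN X" "sorted_wrt (\<lambda>a b. fst (last a) < fst (hd b)) ws"
  shows "prodl X ws = Some (concat ws) \<and> concat ws \<in> FIN X \<and> hd (concat ws) = hd (hd ws)"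
  using assms
proof (induction X ws rule: prodl.induct)
  case (3 X w v ws)
  then have "pdefined X w (concat (v # ws))" unfolding pdefined_def by simp
  then show ?case using "3.IH" "3.prems" pdefined_append_FIN[of X w] pdefined_hd_append[of X w] by auto
qed auto

definition left_quotient :: "(nat \<Rightarrow> 'x set) \<Rightarrow> 'x word set \<Rightarrow> 'x word \<Rightarrow> 'x word set" where
  "left_quotient X A w = {u. pdefined X w u \<and> w @ u \<in> A}"

lemma left_quotient_left_quotient:
  "left_quotient X (left_quotient X A x) y = (if pdefined X x y then left_quotient X A (x @ y) else {})"
proof (cases "pdefined X x y")
  case True
  then show ?thesis unfolding left_quotient_def
    using pdefined_append_left_iff[OF True] pdefined_append_right_iff[of X _ _ x] by auto
next
  case False
  then show ?thesis unfolding left_quotient_def using pdefined_append_right_iff by auto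
qed

section \<open>The semigroup of cofinal ultrafilters\<close>

locale word_ultrafilters =
  fixes X :: "nat \<Rightarrow> 'x set"
begin

definition tail :: "nat \<Rightarrow> 'x word set" where
  "tail N = {w \<in> FIN X. N < fst (hd w)}"

definition cofinal :: "'x word set set set" where
  "cofinal = {W. ultrafilter W \<and> (\<forall>N. tail N \<in> W)}"

definition uprod :: "'x word set set \<Rightarrow> 'x word set set \<Rightarrow> 'x word set set" (infixl "\<odot>" 70) where
  "U \<odot> V = {A. {w. left_quotient X A w \<in> V} \<in> U}"

lemma cofinal_ultrafilter: "U \<in> cofinal \<Longrightarrow> ultrafilter U"
  unfolding cofinal_def by auto

lemma tail_mem_cofinal: "U \<in> cofinal \<Longrightarrow> tail N \<in> U"
  unfolding cofinal_def by auto

lemma tail_subset_FIN: "tail N \<subseteq> FIN X"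
  unfolding tail_def by auto

lemma FIN_mem_cofinal: "U \<in> cofinal \<Longrightarrow> FIN X \<in> U"
  using tail_mem_cofinal tail_subset_FIN ultrafilter_mono cofinal_ultrafilter by metis

lemma pdefined_mem_cofinal:
  assumes "U \<in> cofinal" "w \<in> FIN X"
  shows "{u. pdefined X w u} \<in> U"
proof -
  have "tail (fst (last w)) \<subseteq> {u. pdefined X w u}"
    using assms(2) unfolding tail_def pdefined_def by auto
  then show ?thesis
    using tail_mem_cofinal[OF assms(1)] ultrafilter_mono[OF cofinal_ultrafilter[OF assms(1)]] by blast
qed

lemma uprod_mem_if_extension_closed:
  assumes U: "U \<in> cofinal" "S \<in> U" and V: "V \<in> cofinal"
    and ext: "\<And>w u. w \<in> S \<Longrightarrow> pdefined X w u \<Longrightarrow> w @ u \<in> S"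
    and S: "S \<subseteq> FIN X"
  shows "S \<in> U \<odot> V"
proof -
  have "S \<subseteq> {w. left_quotient X S w \<in> V}"
  proof
    fix w assume w: "w \<in> S"
    have "{u. pdefined X w u} \<subseteq> left_quotient X S w"
      using ext[OF w] unfolding left_quotient_def by blast
    then show "w \<in> {w. left_quotient X S w \<in> V}"
      using pdefined_mem_cofinal[OF V] w S ultrafilter_mono[OF cofinal_ultrafilter[OF V]] by blast
  qed
  then show ?thesis
    using U ultrafilter_mono[OF cofinal_ultrafilter[OF U(1)]] by (auto simp: uprod_def)
qed

lemma uprod_mem_if_product_closed:
  assumes U: "U \<in> cofinal" "R \<in> U" and V: "V \<in> cofinal" "S \<in> V"
    and prod: "\<And>w u. w \<in> R \<Longrightarrow> u \<in> S \<Longrightarrow> pdefined X w u \<Longrightarrow> w @ u \<in> S"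
    and R: "R \<subseteq> FIN X"
  shows "S \<in> U \<odot> V"
proof -
  have "R \<subseteq> {w. left_quotient X S w \<in> V}"
  proof
    fix w assume w: "w \<in> R"
    have "S \<inter> {u. pdefined X w u} \<subseteq> left_quotient X S w"
      using prod[OF w] unfolding left_quotient_def by blast
    moreover have "S \<inter> {u. pdefined X w u} \<in> V"
      using ultrafilter_Int[OF cofinal_ultrafilter[OF V(1)] V(2) pdefined_mem_cofinal[OF V(1)]] w R
      by blast
    ultimately show "w \<in> {w. left_quotient X S w \<in> V}"
      using ultrafilter_mono[OF cofinal_ultrafilter[OF V(1)]] by blast
  qed
  then show ?thesis
    using U ultrafilter_mono[OF cofinal_ultrafilter[OF U(1)]] unfolding uprod_def by blast
qed

lemma uprod_mem_cofinal:
  assumes U: "U \<in> cofinal" and V: "V \<in> cofinal"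
  shows "U \<odot> V \<in> cofinal"
proof -
  have uU: "ultrafilter U" and uV: "ultrafilter V" using U V cofinal_ultrafilter by auto
  have "ultrafilter {A. {w. left_quotient X A w \<in> V} \<in> U}"
  proof (rule ultrafilter_vimage[OF uU FIN_mem_cofinal[OF U]])
    show "{w. left_quotient X S w \<in> V} \<subseteq> {w. left_quotient X T w \<in> V}" if "S \<subseteq> T" for S T
    proof -
      have "left_quotient X S w \<subseteq> left_quotient X T w" for w
        using that unfolding left_quotient_def by blast
      then show ?thesis using ultrafilter_mono[OF uV] by blast
    qed
    show "{w. left_quotient X S w \<in> V} \<inter> {w. left_quotient X T w \<in> V}
        \<subseteq> {w. left_quotient X (S \<inter> T) w \<in> V}" for S T
    proof -
      have "left_quotient X S w \<inter> left_quotient X T w = left_quotient X (S \<inter> T) w" for w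
        unfolding left_quotient_def by auto
      then show ?thesis using ultrafilter_Int[OF uV] by fastforce
    qed
    show "{w. left_quotient X {} w \<in> V} \<notin> U"
      using ultrafilter_empty[OF uU] ultrafilter_empty[OF uV] unfolding left_quotient_def by simp
    show "FIN X - {w. left_quotient X S w \<in> V} \<subseteq> {w. left_quotient X (- S) w \<in> V}" for S
    proof
      fix w assume w: "w \<in> FIN X - {w. left_quotient X S w \<in> V}"
      then have "- left_quotient X S w \<inter> {u. pdefined X w u} \<in> V"
        using ultrafilter_Compl[OF uV] ultrafilter_Int[OF uV] pdefined_mem_cofinal[OF V] by blast
      moreover have "- left_quotient X S w \<inter> {u. pdefined X w u} = left_quotient X (- S) w"
        unfolding left_quotient_def by auto
      ultimately show "w \<in> {w. left_quotient X (- S) w \<in> V}" by simp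
    qed
  qed
  moreover have "tail N \<in> U \<odot> V" for N
    using uprod_mem_if_extension_closed[OF U tail_mem_cofinal[OF U] V _ tail_subset_FIN]
      pdefined_append_FIN pdefined_hd_append unfolding tail_def by fastforce
  ultimately show ?thesis unfolding cofinal_def uprod_def by blast
qed

lemma uprod_assoc:
  assumes W: "W \<in> cofinal"
  shows "U \<odot> V \<odot> W = U \<odot> (V \<odot> W)"
proof -
  have "{y. left_quotient X (left_quotient X A x) y \<in> W} = left_quotient X {w. left_quotient X A w \<in> W} x"
    for A x
  proof -
    have "left_quotient X (left_quotient X A x) y \<in> W \<longleftrightarrow> pdefined X x y \<and> left_quotient X A (x @ y) \<in> W" for y
      using left_quotient_left_quotient[of X A x y] ultrafilter_empty[OF cofinal_ultrafilter[OF W]] by auto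
    then show ?thesis unfolding left_quotient_def by auto
  qed
  then show ?thesis by (intro set_eqI) (simp add: uprod_def)
qed

lemma cofinal_ultrafilter_exists:
  assumes S: "S \<subseteq> FIN X" and unbounded: "\<And>N. \<exists>w\<in>S. N < fst (hd w)"
  obtains U where "U \<in> cofinal" "S \<in> U"
proof -
  have "finite_intersection_property (insert S (range tail))"
    unfolding finite_intersection_property_def
  proof (intro allI impI)
    fix Q assume Q: "finite Q \<and> Q \<subseteq> insert S (range tail)"
    then obtain Ns where Ns: "finite Ns" "Q - {S} = tail ` Ns"
      by (metis Diff_subset_conv finite_Diff finite_subset_image insert_is_Un)
    obtain w where w: "w \<in> S" "Max (insert 0 Ns) < fst (hd w)" using unbounded by blast
    have "w \<in> tail N" if "N \<in> Ns" for N
      using that Ns(1) w S unfolding tail_def by fastforce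
    then have "w \<in> \<Inter>Q" using w(1) Ns(2) by blast
    then show "\<Inter>Q \<noteq> {}" by blast
  qed
  then obtain W where "ultrafilter W" "insert S (range tail) \<subseteq> W" by (rule ultrafilter_exists)
  then show thesis using that[of W] unfolding cofinal_def by blast
qed

text \<open>Closed sets of the Stone topology: \<open>C\<close> is closed iff it contains every cofinal
  ultrafilter extending the common members \<open>\<Inter>C\<close> of its elements.\<close>

definition stone_closed :: "'x word set set set \<Rightarrow> bool" where
  "stone_closed C \<longleftrightarrow> C \<subseteq> cofinal \<and> (\<forall>U\<in>cofinal. \<Inter>C \<subseteq> U \<longrightarrow> U \<in> C)"

lemma stone_closed_mem: "stone_closed {U \<in> cofinal. S \<in> U}"
  unfolding stone_closed_def by auto

lemma stone_closed_cofinal: "stone_closed cofinal"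
  unfolding stone_closed_def by auto

lemma stone_closed_Inter:
  assumes "\<C> \<noteq> {}" "\<And>C. C \<in> \<C> \<Longrightarrow> stone_closed C"
  shows "stone_closed (\<Inter>\<C>)"
  unfolding stone_closed_def
proof (intro conjI ballI impI)
  show "\<Inter>\<C> \<subseteq> cofinal" using assms unfolding stone_closed_def by blast
  fix U assume U: "U \<in> cofinal" "\<Inter>(\<Inter>\<C>) \<subseteq> U"
  have "U \<in> C" if "C \<in> \<C>" for C
  proof -
    have "\<Inter>C \<subseteq> \<Inter>(\<Inter>\<C>)" using that by (intro Inter_anti_mono Inter_lower)
    then have "\<Inter>C \<subseteq> U" using U(2) by (rule order_trans)
    then show "U \<in> C" using assms(2)[OF that] U(1) unfolding stone_closed_def by blast
  qed
  then show "U \<in> \<Inter>\<C>" by blast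
qed

lemma stone_closed_Int: "stone_closed C \<Longrightarrow> stone_closed D \<Longrightarrow> stone_closed (C \<inter> D)"
  using stone_closed_Inter[of "{C, D}"] by auto

text \<open>Compactness: an ultrafilter extending the common members of all sets of the family
  lies in each of them.\<close>

lemma stone_closed_compact:
  assumes ne: "\<C> \<noteq> {}" and closed: "\<And>C. C \<in> \<C> \<Longrightarrow> stone_closed C"
    and fin: "\<And>\<F>. finite \<F> \<Longrightarrow> \<F> \<noteq> {} \<Longrightarrow> \<F> \<subseteq> \<C> \<Longrightarrow> \<Inter>\<F> \<noteq> {}"
  shows "\<Inter>\<C> \<noteq> {}"
proof -
  obtain C0 where C0: "C0 \<in> \<C>" using ne by blast
  have "finite_intersection_property (\<Union>C\<in>\<C>. \<Inter>C)"
    unfolding finite_intersection_property_def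
  proof (intro allI impI)
    fix S assume S: "finite S \<and> S \<subseteq> (\<Union>C\<in>\<C>. \<Inter>C)"
    then obtain g where g: "\<And>s. s \<in> S \<Longrightarrow> g s \<in> \<C> \<and> s \<in> \<Inter>(g s)" by (metis UN_E subsetD)
    have "\<Inter>(insert C0 (g ` S)) \<noteq> {}" by (intro fin) (use S g C0 in auto)
    then obtain V where V: "V \<in> C0" "\<And>s. s \<in> S \<Longrightarrow> V \<in> g s" by blast
    then have uV: "ultrafilter V" using closed[OF C0] cofinal_ultrafilter unfolding stone_closed_def by blast
    have "S \<subseteq> V" using g V(2) by blast
    then show "\<Inter>S \<noteq> {}" using ultrafilter_Inter[OF uV] ultrafilter_nonempty[OF uV] S by blast
  qed
  then obtain W where W: "ultrafilter W" "(\<Union>C\<in>\<C>. \<Inter>C) \<subseteq> W" by (rule ultrafilter_exists)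
  have "tail N \<in> \<Inter>C0" for N
    using closed[OF C0] tail_mem_cofinal unfolding stone_closed_def by blast
  then have "W \<in> cofinal" using W C0 unfolding cofinal_def by blast
  then have "W \<in> C" if "C \<in> \<C>" for C using closed[OF that] W(2) that unfolding stone_closed_def by blast
  then show ?thesis by blast
qed

lemma stone_closed_chain_Inter:
  assumes "\<C> \<noteq> {}" "\<And>C. C \<in> \<C> \<Longrightarrow> stone_closed C \<and> C \<noteq> {}" "subset.chain \<A> \<C>"
  shows "\<Inter>\<C> \<noteq> {}"
proof (rule stone_closed_compact)
  fix \<F> assume "finite \<F>" "\<F> \<noteq> {}" "\<F> \<subseteq> \<C>"
  moreover from this have "subset.chain \<A> \<F>" using assms(3) unfolding subset_chain_def by blast
  ultimately show "\<Inter>\<F> \<noteq> {}" using Inter_in_chain assms(2) by blast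
qed (use assms in auto)

text \<open>Right multiplication is continuous, so it maps closed sets to closed sets; a preimage of
  \<open>U\<close> is found by compactness among the closed sets \<open>K A\<close>, \<open>A \<in> U\<close>.\<close>

lemma stone_closed_uprod_right:
  assumes C: "stone_closed C" and x: "x \<in> cofinal"
  shows "stone_closed ((\<lambda>V. V \<odot> x) ` C)"
  unfolding stone_closed_def
proof (intro conjI ballI impI)
  have Cx: "V \<odot> x \<in> cofinal" if "V \<in> C" for V
    using that C x uprod_mem_cofinal unfolding stone_closed_def by blast
  then show "(\<lambda>V. V \<odot> x) ` C \<subseteq> cofinal" by blast
  fix U assume U: "U \<in> cofinal" "\<Inter>((\<lambda>V. V \<odot> x) ` C) \<subseteq> U"
  have uU: "ultrafilter U" using U cofinal_ultrafilter by blast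
  define K where "K A = {V \<in> C. A \<in> V \<odot> x}" for A
  have K_eq: "K A = C \<inter> {V \<in> cofinal. {w. left_quotient X A w \<in> x} \<in> V}" for A
    unfolding K_def uprod_def using C unfolding stone_closed_def by auto
  have "\<Inter>(K ` U) \<noteq> {}"
  proof (rule stone_closed_compact)
    show "K ` U \<noteq> {}" using ultrafilter_UNIV[OF uU] by blast
    show "stone_closed D" if "D \<in> K ` U" for D
      using that stone_closed_Int[OF C stone_closed_mem] unfolding K_eq by blast
    fix \<F> assume \<F>: "finite \<F>" "\<F> \<noteq> {}" "\<F> \<subseteq> K ` U"
    then obtain As where As: "As \<subseteq> U" "finite As" "\<F> = K ` As" by (meson finite_subset_image)
    have AsU: "\<Inter>As \<in> U" using ultrafilter_Inter[OF uU As(2,1)] .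
    have "K (\<Inter>As) \<subseteq> K A" if "A \<in> As" for A
      using that ultrafilter_mono[OF cofinal_ultrafilter[OF Cx]] unfolding K_def by blast
    then have "K (\<Inter>As) \<subseteq> \<Inter>\<F>" using As(3) by blast
    moreover have "K (\<Inter>As) \<noteq> {}"
    proof
      assume "K (\<Inter>As) = {}"
      then have "- \<Inter>As \<in> \<Inter>((\<lambda>V. V \<odot> x) ` C)"
        using Cx cofinal_ultrafilter ultrafilter_Compl unfolding K_def by fastforce
      then show False using U(2) ultrafilter_not_Compl[OF uU AsU] by blast
    qed
    ultimately show "\<Inter>\<F> \<noteq> {}" by blast
  qed
  then obtain V where V: "\<And>A. A \<in> U \<Longrightarrow> V \<in> K A" by blast
  have VC: "V \<in> C" using V[OF ultrafilter_UNIV[OF uU]] unfolding K_def by blast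
  have "U \<subseteq> V \<odot> x" using V unfolding K_def by blast
  then have "U = V \<odot> x" using ultrafilter_eqI[OF uU] Cx[OF VC] cofinal_ultrafilter by blast
  then show "U \<in> (\<lambda>V. V \<odot> x) ` C" using VC by blast
qed

definition subsemigroup :: "'x word set set set \<Rightarrow> bool" where
  "subsemigroup C \<longleftrightarrow> (\<forall>U\<in>C. \<forall>V\<in>C. U \<odot> V \<in> C)"

definition left_ideal :: "'x word set set set \<Rightarrow> 'x word set set set \<Rightarrow> bool" where
  "left_ideal T L \<longleftrightarrow> L \<subseteq> T \<and> (\<forall>t\<in>T. \<forall>l\<in>L. t \<odot> l \<in> L)"

lemma subsemigroup_Inter:
  "(\<And>C. C \<in> \<C> \<Longrightarrow> subsemigroup C) \<Longrightarrow> subsemigroup (\<Inter>\<C>)"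
  unfolding subsemigroup_def by blast

lemma left_ideal_Inter:
  "\<C> \<noteq> {} \<Longrightarrow> (\<And>L. L \<in> \<C> \<Longrightarrow> left_ideal T L) \<Longrightarrow> left_ideal T (\<Inter>\<C>)"
  unfolding left_ideal_def by blast

lemma subsemigroup_uprod_right:
  assumes "subsemigroup C" "C \<subseteq> cofinal" "x \<in> C"
  shows "subsemigroup ((\<lambda>V. V \<odot> x) ` C)"
  unfolding subsemigroup_def
proof (intro ballI)
  fix a b assume "a \<in> (\<lambda>V. V \<odot> x) ` C" "b \<in> (\<lambda>V. V \<odot> x) ` C"
  then obtain b' where ab: "a \<in> C" "b' \<in> C" "b = b' \<odot> x"
    using assms unfolding subsemigroup_def by blast
  then have "a \<odot> b = a \<odot> b' \<odot> x" using uprod_assoc[of x a b'] assms by auto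
  moreover have "a \<odot> b' \<in> C" using ab assms(1) unfolding subsemigroup_def by blast
  ultimately show "a \<odot> b \<in> (\<lambda>V. V \<odot> x) ` C" by blast
qed

lemma stone_closed_right_stabiliser:
  assumes M: "stone_closed M" and x: "x \<in> cofinal"
  shows "stone_closed {V \<in> M. V \<odot> x = x}"
  unfolding stone_closed_def
proof (intro conjI ballI impI)
  show "{V \<in> M. V \<odot> x = x} \<subseteq> cofinal" using M unfolding stone_closed_def by blast
  fix U assume U: "U \<in> cofinal" "\<Inter>{V \<in> M. V \<odot> x = x} \<subseteq> U"
  have "\<Inter>M \<subseteq> U" using U(2) by blast
  then have UM: "U \<in> M" using M U(1) unfolding stone_closed_def by blast
  have "x \<subseteq> U \<odot> x"
  proof
    fix A assume "A \<in> x"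
    then have "{w. left_quotient X A w \<in> x} \<in> \<Inter>{V \<in> M. V \<odot> x = x}" unfolding uprod_def by auto
    then show "A \<in> U \<odot> x" using U(2) unfolding uprod_def by blast
  qed
  then have "x = U \<odot> x"
    using ultrafilter_eqI cofinal_ultrafilter x uprod_mem_cofinal[OF U(1) x] by blast
  then show "U \<in> {V \<in> M. V \<odot> x = x}" using UM by simp
qed

text \<open>The Ellis--Numakura lemma, via a minimal closed subsemigroup \<open>M\<close>: for \<open>x \<in> M\<close>
  both \<open>M \<odot> x\<close> and \<open>{V \<in> M. V \<odot> x = x}\<close> are closed subsemigroups of \<open>M\<close>, hence equal to \<open>M\<close>.\<close>

lemma Ellis_Numakura:
  assumes "stone_closed C" "C \<noteq> {}" "subsemigroup C"
  obtains e where "e \<in> C" "e \<odot> e = e"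
proof -
  let ?\<A> = "{D. D \<subseteq> C \<and> stone_closed D \<and> D \<noteq> {} \<and> subsemigroup D}"
  have "\<exists>M\<in>?\<A>. \<forall>D\<in>?\<A>. D \<subseteq> M \<longrightarrow> D = M"
  proof (rule subset_Zorn_minimal)
    show "?\<A> \<noteq> {}" using assms by blast
    fix \<C> assume \<C>: "\<C> \<noteq> {}" "subset.chain ?\<A> \<C>"
    then have D: "D \<subseteq> C \<and> stone_closed D \<and> D \<noteq> {} \<and> subsemigroup D" if "D \<in> \<C>" for D
      using that unfolding subset_chain_def by blast
    have "stone_closed (\<Inter>\<C>)" using stone_closed_Inter[OF \<C>(1)] D by blast
    moreover have "\<Inter>\<C> \<noteq> {}" using stone_closed_chain_Inter[OF \<C>(1) _ \<C>(2)] D by blast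
    moreover have "subsemigroup (\<Inter>\<C>)" using subsemigroup_Inter D by blast
    moreover have "\<Inter>\<C> \<subseteq> C" using \<C>(1) D by blast
    ultimately show "\<Inter>\<C> \<in> ?\<A>" by blast
  qed
  then obtain M where M0: "M \<in> ?\<A>" and M_min0: "\<forall>D\<in>?\<A>. D \<subseteq> M \<longrightarrow> D = M" by blast
  have M: "M \<subseteq> C" "stone_closed M" "M \<noteq> {}" "subsemigroup M" using M0 by simp_all
  have M_min: "D = M" if "D \<subseteq> M" "stone_closed D" "D \<noteq> {}" "subsemigroup D" for D
    using M_min0 M(1) that by blast
  obtain x where xM: "x \<in> M" using M(3) by blast
  have M_cofinal: "M \<subseteq> cofinal" using M(2) unfolding stone_closed_def by blast
  then have x: "x \<in> cofinal" using xM by blast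
  have "(\<lambda>V. V \<odot> x) ` M \<subseteq> M" using xM M(4) unfolding subsemigroup_def by blast
  then have "(\<lambda>V. V \<odot> x) ` M = M"
    using stone_closed_uprod_right[OF M(2) x] M(3) subsemigroup_uprod_right[OF M(4) M_cofinal xM]
    by (intro M_min) auto
  then obtain V0 where V0: "V0 \<in> M" "V0 \<odot> x = x" using xM by (metis imageE)
  let ?K = "{V \<in> M. V \<odot> x = x}"
  have "stone_closed ?K" using stone_closed_right_stabiliser[OF M(2) x] .
  moreover have "subsemigroup ?K"
    unfolding subsemigroup_def
  proof (intro ballI)
    fix a b assume "a \<in> ?K" "b \<in> ?K"
    then show "a \<odot> b \<in> ?K" using M(4) uprod_assoc[OF x, of a b] unfolding subsemigroup_def by simp
  qed
  ultimately have "?K = M" using V0 by (intro M_min) auto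
  then show thesis using that xM M(1) by blast
qed

text \<open>In a minimal closed left ideal \<open>L\<close> every idempotent \<open>e\<close> is a right identity, since
  \<open>T \<odot> e\<close> is again a closed left ideal contained in \<open>L\<close>.\<close>

lemma minimal_left_ideal_exists:
  assumes T: "stone_closed T" "T \<noteq> {}" "subsemigroup T"
  obtains L where "left_ideal T L" "stone_closed L" "L \<noteq> {}"
    "\<And>x e. x \<in> L \<Longrightarrow> e \<in> L \<Longrightarrow> e \<odot> e = e \<Longrightarrow> x \<odot> e = x"
proof -
  let ?\<A> = "{D. left_ideal T D \<and> stone_closed D \<and> D \<noteq> {}}"
  have "\<exists>M\<in>?\<A>. \<forall>D\<in>?\<A>. D \<subseteq> M \<longrightarrow> D = M"
  proof (rule subset_Zorn_minimal)
    show "?\<A> \<noteq> {}" using T unfolding left_ideal_def subsemigroup_def by blast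
    fix \<C> assume \<C>: "\<C> \<noteq> {}" "subset.chain ?\<A> \<C>"
    then show "\<Inter>\<C> \<in> ?\<A>"
      using stone_closed_Inter stone_closed_chain_Inter[OF \<C>(1) _ \<C>(2)] left_ideal_Inter[OF \<C>(1)]
      unfolding subset_chain_def by auto
  qed
  then obtain L where L: "left_ideal T L" "stone_closed L" "L \<noteq> {}"
    and L_min: "\<And>D. left_ideal T D \<Longrightarrow> stone_closed D \<Longrightarrow> D \<noteq> {} \<Longrightarrow> D \<subseteq> L \<Longrightarrow> D = L"
    by auto
  have "x \<odot> e = x" if x: "x \<in> L" and e: "e \<in> L" "e \<odot> e = e" for x e
  proof -
    have eT: "e \<in> T" using e L(1) unfolding left_ideal_def by blast
    have e_cofinal: "e \<in> cofinal" using eT T(1) unfolding stone_closed_def by blast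
    have "left_ideal T ((\<lambda>V. V \<odot> e) ` T)"
      using subsemigroup_uprod_right[OF T(3) _ eT] T(1,3) eT
      unfolding left_ideal_def subsemigroup_def stone_closed_def
      by (auto simp: uprod_assoc[OF e_cofinal, symmetric])
    moreover have "(\<lambda>V. V \<odot> e) ` T \<subseteq> L" using L(1) e unfolding left_ideal_def by blast
    ultimately have "(\<lambda>V. V \<odot> e) ` T = L"
      using L_min stone_closed_uprod_right[OF T(1) e_cofinal] T(2) by blast
    then obtain t where "t \<in> T" "x = t \<odot> e" using x by blast
    then show ?thesis using e(2) uprod_assoc[OF e_cofinal, of t e] by simp
  qed
  with L show thesis using that by blast
qed

lemma minimal_idempotent_exists:
  assumes T: "stone_closed T" "T \<noteq> {}" "subsemigroup T"
  shows "\<exists>F\<in>T. F \<odot> F = F \<and> (\<forall>G\<in>T. G \<odot> G = G \<longrightarrow> G \<odot> F = G \<longrightarrow> F \<odot> G = F)"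
proof -
  obtain L where L: "left_ideal T L" "stone_closed L" "L \<noteq> {}"
    and right_identity: "\<And>x e. x \<in> L \<Longrightarrow> e \<in> L \<Longrightarrow> e \<odot> e = e \<Longrightarrow> x \<odot> e = x"
    using minimal_left_ideal_exists[OF T] by blast
  have "subsemigroup L" using L(1) unfolding left_ideal_def subsemigroup_def by blast
  then obtain F where F: "F \<in> L" "F \<odot> F = F" using Ellis_Numakura[OF L(2,3)] by blast
  have "F \<odot> G = F" if "G \<in> T" "G \<odot> G = G" "G \<odot> F = G" for G
    using right_identity[OF F(1), of G] that L(1) F(1) unfolding left_ideal_def by metis
  then show ?thesis using F L(1) unfolding left_ideal_def by blast
qed

lemma idempotent_right_absorbing_exists:
  assumes F: "F \<in> cofinal" "F \<odot> F = F"
    and S: "W0 \<in> cofinal" "S \<in> W0"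
    and S_right: "\<And>U V. U \<in> cofinal \<Longrightarrow> V \<in> cofinal \<Longrightarrow> S \<in> U \<Longrightarrow> S \<in> U \<odot> V"
  obtains V where "V \<in> cofinal" "S \<in> V" "V \<odot> V = V" "V \<odot> F = V"
proof -
  let ?C = "{W \<in> cofinal. S \<in> W} \<inter> (\<lambda>V. V \<odot> F) ` cofinal"
  have "stone_closed ?C"
    using stone_closed_Int[OF stone_closed_mem stone_closed_uprod_right[OF stone_closed_cofinal F(1)]] .
  moreover have "W0 \<odot> F \<in> ?C"
    using S_right[OF S(1) F(1) S(2)] uprod_mem_cofinal[OF S(1) F(1)] S(1) by blast
  then have "?C \<noteq> {}" by blast
  moreover have "subsemigroup ?C"
    unfolding subsemigroup_def
  proof (intro ballI)
    fix a b assume a: "a \<in> ?C" and b: "b \<in> ?C"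
    then obtain b' where b': "b' \<in> cofinal" "b = b' \<odot> F" by blast
    have ab: "a \<odot> b = a \<odot> b' \<odot> F" using b' uprod_assoc[OF F(1), of a b'] by simp
    have "a \<odot> b' \<in> cofinal" using a b'(1) uprod_mem_cofinal by blast
    then have "a \<odot> b \<in> (\<lambda>V. V \<odot> F) ` cofinal" unfolding ab by (rule imageI)
    moreover have "a \<odot> b \<in> cofinal" using a b uprod_mem_cofinal by blast
    moreover have "S \<in> a \<odot> b" using a b S_right[of a b] by blast
    ultimately show "a \<odot> b \<in> ?C" by blast
  qed
  ultimately obtain V where V: "V \<in> ?C" "V \<odot> V = V" by (rule Ellis_Numakura)
  then obtain a where "a \<in> cofinal" "V = a \<odot> F" by blast
  then have "V \<odot> F = V" using uprod_assoc[OF F(1), of a F] F(2) by simp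
  then show thesis using that V by blast
qed

lemma idempotent_absorbing_exists:
  assumes F: "F \<in> cofinal" "F \<odot> F = F"
    and S: "W0 \<in> cofinal" "S \<in> W0"
    and S_right: "\<And>U V. U \<in> cofinal \<Longrightarrow> V \<in> cofinal \<Longrightarrow> S \<in> U \<Longrightarrow> S \<in> U \<odot> V"
    and S_left: "\<And>U V. U \<in> cofinal \<Longrightarrow> V \<in> cofinal \<Longrightarrow> S \<in> V \<Longrightarrow> S \<in> U \<odot> V"
  obtains U where "U \<in> cofinal" "S \<in> U" "U \<odot> U = U" "F \<odot> U = U" "U \<odot> F = U"
proof -
  obtain V where V: "V \<in> cofinal" "S \<in> V" "V \<odot> V = V" "V \<odot> F = V"
    using idempotent_right_absorbing_exists[OF F S S_right] by blast
  have FV: "F \<odot> V \<in> cofinal" using uprod_mem_cofinal[OF F(1) V(1)] .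
  have "F \<odot> V \<odot> (F \<odot> V) = F \<odot> (V \<odot> F \<odot> V)"
    using uprod_assoc[OF FV, of F V] uprod_assoc[OF V(1), of V F] by simp
  also have "\<dots> = F \<odot> V" using V(3,4) by simp
  finally have "F \<odot> V \<odot> (F \<odot> V) = F \<odot> V" .
  moreover have "F \<odot> (F \<odot> V) = F \<odot> V" using F(2) uprod_assoc[OF V(1), of F F] by simp
  moreover have "F \<odot> V \<odot> F = F \<odot> V" using V(4) uprod_assoc[OF F(1), of F V] by simp
  ultimately show thesis using that[of "F \<odot> V"] FV S_left[OF F(1) V(1,2)] by blast
qed

end

section \<open>The action of \<open>J(\<emptyset>, B)\<close> on words and on ultrafilters\<close>

lemma map_fst_wact: "map fst (wact act a w) = map fst w"
  unfolding wact_def by (induction w) auto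

lemma wact_eq_Nil_iff: "wact act a w = [] \<longleftrightarrow> w = []"
  unfolding wact_def by simp

lemma fst_hd_wact: "w \<noteq> [] \<Longrightarrow> fst (hd (wact act a w)) = fst (hd w)"
  by (metis hd_map map_fst_wact wact_eq_Nil_iff)

lemma fst_last_wact: "w \<noteq> [] \<Longrightarrow> fst (last (wact act a w)) = fst (last w)"
  by (metis last_map map_fst_wact wact_eq_Nil_iff)

lemma wact_append: "wact act a (x @ y) = wact act a x @ wact act a y"
  unfolding wact_def by simp

lemma pattern_word_0: "pattern_word act v v' 0 is js bs bs' = wact act (Some (bs 0)) (v (is 0))"
  unfolding pattern_word_def by simp

lemma pattern_word_Suc:
  "pattern_word act v v' (Suc n) is js bs bs' = pattern_word act v v' n is js bs bs'
     @ (wact act (Some (bs' n)) (v' (js n)) @ wact act (Some (bs (Suc n))) (v (is (Suc n))))"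
  unfolding pattern_word_def by simp

locale pointed_J_sets = word_ultrafilters X
  for B :: "'b set" and X :: "nat \<Rightarrow> 'x set" and act :: "nat \<Rightarrow> 'b option \<Rightarrow> 'x \<Rightarrow> 'x"
    and p :: "nat \<Rightarrow> 'x" and E :: "'x word set" +
  assumes finite_B: "finite B"
    and pointed: "\<And>n. pointed_J_set B (X n) (act n) (p n)"
    and right_ideal_E: "right_ideal X E"
    and directed_E: "E_directed X E"
begin

abbreviation bact :: "'b \<Rightarrow> 'x word \<Rightarrow> 'x word" where
  "bact b \<equiv> wact act (Some b)"

definition uact :: "'b \<Rightarrow> 'x word set set \<Rightarrow> 'x word set set" where
  "uact b U = {A. bact b -` A \<in> U}"

definition fixed_words :: "'x word set" where
  "fixed_words = {w \<in> FIN X. \<forall>(m, z)\<in>set w. \<forall>a\<in>Jcarrier B. act m a z = z}"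

definition pointed_words :: "'x word set" where
  "pointed_words = {w \<in> FIN X. \<exists>m. (m, p m) \<in> set w}"

lemma p_mem: "p m \<in> X m"
  using pointed[of m] unfolding pointed_J_set_def by blast

lemma Some_mem_Jcarrier: "b \<in> B \<Longrightarrow> Some b \<in> Jcarrier B"
  unfolding Jcarrier_def by blast

lemma act_closed: "a \<in> Jcarrier B \<Longrightarrow> x \<in> X m \<Longrightarrow> act m a x \<in> X m"
  using pointed[of m] unfolding pointed_J_set_def is_J_action_def by blast

lemma act_act_Some:
  assumes "b \<in> B" "a \<in> Jcarrier B" "x \<in> X m"
  shows "act m a (act m (Some b) x) = act m (Some b) x"
  using pointed[of m] assms Some_mem_Jcarrier[OF assms(1)]
  unfolding pointed_J_set_def is_J_action_def jmult_def by simp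

lemma bact_FIN:
  assumes "b \<in> B" "w \<in> FIN X"
  shows "bact b w \<in> FIN X"
proof -
  have "sorted_wrt (<) (map fst (bact b w))"
    using FIN_sorted[OF assms(2)] by (simp only: map_fst_wact)
  moreover have "\<forall>(m, x)\<in>set (bact b w). x \<in> X m"
    using assms act_closed[OF Some_mem_Jcarrier[OF assms(1)]] unfolding FIN_def wact_def by auto
  ultimately show ?thesis
    using FIN_nonempty[OF assms(2)] unfolding FIN_def by (simp add: wact_eq_Nil_iff)
qed

lemma bact_fixed_words:
  assumes "b \<in> B" "w \<in> FIN X"
  shows "bact b w \<in> fixed_words"
  using bact_FIN[OF assms] assms act_act_Some[OF assms(1)]
  unfolding fixed_words_def FIN_def wact_def by auto

lemma bact_fixed:
  assumes "b \<in> B" "w \<in> fixed_words"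
  shows "bact b w = w"
proof -
  have "\<forall>(m, z)\<in>set w. act m (Some b) z = z"
    using assms Some_mem_Jcarrier unfolding fixed_words_def by blast
  then show ?thesis unfolding wact_def by (induction w) auto
qed

lemma pdefined_bact_iff:
  assumes "b \<in> B" "x \<in> FIN X" "y \<in> FIN X"
  shows "pdefined X (bact b x) (bact b y) \<longleftrightarrow> pdefined X x y"
  using assms bact_FIN[OF assms(1)] fst_last_wact[OF FIN_nonempty[OF assms(2)], of act "Some b"]
    fst_hd_wact[OF FIN_nonempty[OF assms(3)], of act "Some b"]
  unfolding pdefined_def by auto

lemma uact_mem_cofinal:
  assumes b: "b \<in> B" and U: "U \<in> cofinal"
  shows "uact b U \<in> cofinal"
proof -
  have uU: "ultrafilter U" using cofinal_ultrafilter[OF U] .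
  have "ultrafilter (uact b U)"
    unfolding uact_def
    by (rule ultrafilter_vimage[OF uU ultrafilter_UNIV[OF uU]])
      (use ultrafilter_empty[OF uU] in \<open>auto simp del: vimage_Collect_eq\<close>)
  moreover have "tail N \<in> uact b U" for N
  proof -
    have "tail N \<subseteq> bact b -` tail N"
    proof
      fix w assume "w \<in> tail N"
      then show "w \<in> bact b -` tail N"
        using bact_FIN[OF b] fst_hd_wact[OF FIN_nonempty, of w X act "Some b"] unfolding tail_def by auto
    qed
    then show ?thesis
      using tail_mem_cofinal[OF U] ultrafilter_mono[OF uU] unfolding uact_def by blast
  qed
  ultimately show ?thesis unfolding cofinal_def by blast
qed

lemma fixed_words_mem_uact:
  assumes "b \<in> B" "U \<in> cofinal"
  shows "fixed_words \<in> uact b U"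
proof -
  have "FIN X \<subseteq> bact b -` fixed_words" using bact_fixed_words[OF assms(1)] by blast
  then show ?thesis
    using FIN_mem_cofinal[OF assms(2)] ultrafilter_mono[OF cofinal_ultrafilter[OF assms(2)]]
    unfolding uact_def by blast
qed

lemma uact_fixed:
  assumes b: "b \<in> B" and F: "F \<in> cofinal" "fixed_words \<in> F"
  shows "uact b F = F"
proof (rule set_eqI)
  fix A
  have "bact b -` A \<inter> fixed_words = A \<inter> fixed_words" using bact_fixed[OF b] by auto
  then show "A \<in> uact b F \<longleftrightarrow> A \<in> F"
    using ultrafilter_cong[OF cofinal_ultrafilter[OF F(1)] F(2)] unfolding uact_def by blast
qed

lemma uact_uprod:
  assumes b: "b \<in> B" and U: "U \<in> cofinal" and V: "V \<in> cofinal"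
  shows "uact b (U \<odot> V) = uact b U \<odot> uact b V"
proof (rule set_eqI)
  fix A
  have uU: "ultrafilter U" and uV: "ultrafilter V" using U V cofinal_ultrafilter by auto
  have inner: "left_quotient X (bact b -` A) x \<in> V \<longleftrightarrow>
      bact b -` left_quotient X A (bact b x) \<in> V" if x: "x \<in> FIN X" for x
  proof -
    have "left_quotient X (bact b -` A) x \<inter> FIN X = bact b -` left_quotient X A (bact b x) \<inter> FIN X"
      using pdefined_bact_iff[OF b x] wact_append[of act "Some b" x]
      unfolding left_quotient_def by (simp add: set_eq_iff) blast
    then show ?thesis using ultrafilter_cong[OF uV FIN_mem_cofinal[OF V]] by blast
  qed
  have "{x. left_quotient X (bact b -` A) x \<in> V} \<inter> FIN X
      = {x. bact b -` left_quotient X A (bact b x) \<in> V} \<inter> FIN X"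
    using inner by blast
  then have "{x. left_quotient X (bact b -` A) x \<in> V} \<in> U
      \<longleftrightarrow> {x. bact b -` left_quotient X A (bact b x) \<in> V} \<in> U"
    using ultrafilter_cong[OF uU FIN_mem_cofinal[OF U]] by blast
  moreover have "A \<in> uact b (U \<odot> V) \<longleftrightarrow> {x. left_quotient X (bact b -` A) x \<in> V} \<in> U"
    unfolding uact_def uprod_def by simp
  moreover have "A \<in> uact b U \<odot> uact b V \<longleftrightarrow> {x. bact b -` left_quotient X A (bact b x) \<in> V} \<in> U"
    unfolding uact_def uprod_def by (simp add: vimage_def)
  ultimately show "A \<in> uact b (U \<odot> V) \<longleftrightarrow> A \<in> uact b U \<odot> uact b V" by simp
qed

lemma single_FIN: "x \<in> X N \<Longrightarrow> [(N, x)] \<in> FIN X"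
  unfolding FIN_def by simp

lemma E_unbounded: "\<exists>u\<in>E. N < fst (hd u)"
proof -
  obtain u where "u \<in> E" "pdefined X [(N, p N)] u"
    using directed_E single_FIN[OF p_mem] unfolding E_directed_def
    by (metis empty_subsetI finite.emptyI finite_insert insert_subset singletonI)
  then show ?thesis unfolding pdefined_def by auto
qed

lemma pointed_words_unbounded: "\<exists>u\<in>pointed_words. N < fst (hd u)"
  using single_FIN[OF p_mem, of "Suc N"] unfolding pointed_words_def
  by (intro bexI[of _ "[(Suc N, p (Suc N))]"]) auto

lemma fixed_point_exists: "\<exists>z\<in>X m. \<forall>a\<in>Jcarrier B. act m a z = z"
proof (cases "B = {}")
  case True
  then show ?thesis
    using pointed[of m] p_mem unfolding pointed_J_set_def is_J_action_def Jcarrier_def by auto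
next
  case False
  then obtain b where "b \<in> B" by blast
  then show ?thesis using act_act_Some act_closed[OF Some_mem_Jcarrier] p_mem by blast
qed

lemma fixed_words_unbounded: "\<exists>u\<in>fixed_words. N < fst (hd u)"
proof -
  obtain z where "z \<in> X (Suc N)" "\<forall>a\<in>Jcarrier B. act (Suc N) a z = z"
    using fixed_point_exists by blast
  then show ?thesis unfolding fixed_words_def
    by (intro bexI[of _ "[(Suc N, z)]"]) (auto simp: single_FIN)
qed

lemma pointed_words_extension_closed:
  "w \<in> pointed_words \<Longrightarrow> pdefined X w u \<Longrightarrow> w @ u \<in> pointed_words"
  unfolding pointed_words_def using pdefined_append_FIN by fastforce

lemma pointed_words_uprod_left:
  assumes U: "U \<in> cofinal" and V: "V \<in> cofinal" "pointed_words \<in> V"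
  shows "pointed_words \<in> U \<odot> V"
  by (rule uprod_mem_if_product_closed[OF U FIN_mem_cofinal[OF U] V])
    (use pdefined_append_FIN in \<open>auto simp: pointed_words_def\<close>)

lemma fixed_words_uprod:
  assumes U: "U \<in> cofinal" "fixed_words \<in> U" and V: "V \<in> cofinal" "fixed_words \<in> V"
  shows "fixed_words \<in> U \<odot> V"
  by (rule uprod_mem_if_product_closed[OF U V])
    (use pdefined_append_FIN in \<open>auto simp: fixed_words_def\<close>)

lemma minimal_fixed_idempotent_exists:
  "\<exists>F\<in>{U \<in> cofinal. fixed_words \<in> U}. F \<odot> F = F \<and>
     (\<forall>G\<in>{U \<in> cofinal. fixed_words \<in> U}. G \<odot> G = G \<longrightarrow> G \<odot> F = G \<longrightarrow> F \<odot> G = F)"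
proof -
  let ?T = "{U \<in> cofinal. fixed_words \<in> U}"
  have "fixed_words \<subseteq> FIN X" unfolding fixed_words_def by blast
  then obtain Z where "Z \<in> cofinal" "fixed_words \<in> Z"
    using cofinal_ultrafilter_exists fixed_words_unbounded by metis
  then have "?T \<noteq> {}" by blast
  moreover have "subsemigroup ?T"
    unfolding subsemigroup_def using fixed_words_uprod uprod_mem_cofinal by blast
  ultimately show ?thesis by (rule minimal_idempotent_exists[OF stone_closed_mem])
qed

lemma pointed_words_idempotent_exists:
  assumes F: "F \<in> cofinal" "F \<odot> F = F"
  obtains U where "U \<in> cofinal" "pointed_words \<in> U" "U \<odot> U = U" "F \<odot> U = U" "U \<odot> F = U"
proof -
  have pointed_FIN: "pointed_words \<subseteq> FIN X" unfolding pointed_words_def by blast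
  then obtain Y where Y: "Y \<in> cofinal" "pointed_words \<in> Y"
    using cofinal_ultrafilter_exists pointed_words_unbounded by metis
  have pointed_right: "pointed_words \<in> V \<odot> W"
    if "V \<in> cofinal" "W \<in> cofinal" "pointed_words \<in> V" for V W
    using uprod_mem_if_extension_closed[OF that(1,3,2) pointed_words_extension_closed pointed_FIN] .
  show thesis
    using idempotent_absorbing_exists[OF F Y pointed_right pointed_words_uprod_left] that by blast
qed

lemma E_idempotent_exists:
  assumes F: "F \<in> cofinal" "F \<odot> F = F"
  obtains U' where "U' \<in> cofinal" "E \<in> U'" "U' \<odot> U' = U'" "U' \<odot> F = U'"
proof -
  have E_FIN: "E \<subseteq> FIN X" and E_ext: "\<And>w u. w \<in> E \<Longrightarrow> pdefined X w u \<Longrightarrow> w @ u \<in> E"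
    using right_ideal_E unfolding right_ideal_def by blast+
  obtain E0 where E0: "E0 \<in> cofinal" "E \<in> E0"
    using cofinal_ultrafilter_exists[OF E_FIN] E_unbounded by metis
  have E_right: "E \<in> V \<odot> W" if "V \<in> cofinal" "W \<in> cofinal" "E \<in> V" for V W
    using uprod_mem_if_extension_closed[OF that(1,3,2) E_ext E_FIN] .
  show thesis using idempotent_right_absorbing_exists[OF F E0 E_right] that by blast
qed

text \<open>\<open>b(V)\<close> is again an idempotent with \<open>b(V) \<odot> F = b(V)\<close>, now concentrated on fixed words,
  so the minimality of \<open>F\<close> applies to it.\<close>

lemma uact_idempotent_below_minimal:
  assumes F: "F \<in> cofinal" "fixed_words \<in> F"
    and F_min: "\<forall>G\<in>{U \<in> cofinal. fixed_words \<in> U}. G \<odot> G = G \<longrightarrow> G \<odot> F = G \<longrightarrow> F \<odot> G = F"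
    and b: "b \<in> B" and V: "V \<in> cofinal" "V \<odot> V = V" "V \<odot> F = V"
  shows "F \<odot> uact b V = F" "uact b V \<odot> F = uact b V"
proof -
  show below: "uact b V \<odot> F = uact b V"
    using uact_uprod[OF b V(1) F(1)] V(3) uact_fixed[OF b F] by simp
  have "uact b V \<odot> uact b V = uact b V" using uact_uprod[OF b V(1) V(1)] V(2) by simp
  then show "F \<odot> uact b V = F"
    using F_min uact_mem_cofinal[OF b V(1)] fixed_words_mem_uact[OF b V(1)] below by blast
qed

lemma key_ultrafilters_exist:
  obtains F U U' where "F \<in> cofinal" "U \<in> cofinal" "U' \<in> cofinal"
    "pointed_words \<in> U" "E \<in> U'"
    "\<And>b. b \<in> B \<Longrightarrow> uact b U = F"
    "\<And>b. b \<in> B \<Longrightarrow> F \<odot> (uact b U' \<odot> F) = F"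
proof -
  obtain F where F_T: "F \<in> {U \<in> cofinal. fixed_words \<in> U}" and F_idem: "F \<odot> F = F"
    and F_min: "\<forall>G\<in>{U \<in> cofinal. fixed_words \<in> U}. G \<odot> G = G \<longrightarrow> G \<odot> F = G \<longrightarrow> F \<odot> G = F"
    using minimal_fixed_idempotent_exists by blast
  have F: "F \<in> cofinal" "fixed_words \<in> F" "F \<odot> F = F" using F_T F_idem by auto
  note below_F = uact_idempotent_below_minimal[OF F(1,2) F_min]
  obtain U where U: "U \<in> cofinal" "pointed_words \<in> U" "U \<odot> U = U" "F \<odot> U = U" "U \<odot> F = U"
    using pointed_words_idempotent_exists[OF F(1,3)] by blast
  obtain U' where U': "U' \<in> cofinal" "E \<in> U'" "U' \<odot> U' = U'" "U' \<odot> F = U'"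
    using E_idempotent_exists[OF F(1,3)] by blast
  have "uact b U = F" if b: "b \<in> B" for b
  proof -
    have "uact b U = uact b (F \<odot> U)" using U(4) by simp
    also have "\<dots> = F \<odot> uact b U" using uact_uprod[OF b F(1) U(1)] uact_fixed[OF b F(1,2)] by simp
    also have "\<dots> = F" using below_F(1)[OF b U(1,3,5)] .
    finally show ?thesis .
  qed
  moreover have "F \<odot> (uact b U' \<odot> F) = F" if b: "b \<in> B" for b
    using below_F[OF b U'(1,3,4)] by simp
  ultimately show thesis using that F(1) U(1,2) U'(1,2) by blast
qed

end

section \<open>The inductive construction\<close>

locale pattern_construction = pointed_J_sets B X act p E
  for B :: "'b set" and X :: "nat \<Rightarrow> 'x set" and act and p and E +
  fixes F U U' :: "'x word set set" and A :: "'x word set"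
  assumes F: "F \<in> cofinal" and U: "U \<in> cofinal" and U': "U' \<in> cofinal"
    and pointed_words_U: "pointed_words \<in> U" and E_U': "E \<in> U'"
    and uact_U: "\<And>b. b \<in> B \<Longrightarrow> uact b U = F"
    and uact_U': "\<And>b. b \<in> B \<Longrightarrow> F \<odot> (uact b U' \<odot> F) = F"
    and A_F: "A \<in> F"
begin

text \<open>The construction keeps two finite families: sets in \<open>F\<close>, which the next \<open>v\<^sub>i\<close> has to hit
  (after refinement), and sets in every \<open>b(U') \<odot> F\<close>, which the next \<open>v'\<^sub>i\<close> has to hit.\<close>

definition refined :: "'x word set \<Rightarrow> 'x word set" where
  "refined S = {z \<in> S. \<forall>b\<in>B. left_quotient X S z \<in> uact b U' \<odot> F}"

definition good_v :: "nat \<Rightarrow> 'x word set set \<Rightarrow> 'x word \<Rightarrow> bool" where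
  "good_v N \<F> x \<longleftrightarrow> x \<in> pointed_words \<and> x \<in> tail N \<and> (\<forall>b\<in>B. \<forall>S\<in>\<F>. bact b x \<in> refined S)"

definition good_v' :: "nat \<Rightarrow> 'x word set set \<Rightarrow> 'x word \<Rightarrow> bool" where
  "good_v' N \<G> y \<longleftrightarrow> y \<in> E \<and> y \<in> tail N \<and> (\<forall>b\<in>B. \<forall>T\<in>\<G>. left_quotient X T (bact b y) \<in> F)"

definition next_stage ::
  "nat \<Rightarrow> 'x word \<times> 'x word set set \<times> 'x word set set \<Rightarrow> 'x word \<times> 'x word set set \<times> 'x word set set" where
  "next_stage k = (\<lambda>(w, \<F>, \<G>). if even k then
      let x = SOME x. good_v (fst (last w)) \<F> x
      in (x, \<F>, \<G> \<union> (\<lambda>(S, b). left_quotient X S (bact b x)) ` (\<F> \<times> B))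
    else
      let y = SOME y. good_v' (fst (last w)) \<G> y
      in (y, \<F> \<union> (\<lambda>(T, b). left_quotient X T (bact b y)) ` (\<G> \<times> B), \<G>))"

text \<open>The initial word is \<open>[]\<close>, so the first lower bound \<open>fst (last [])\<close> on indices is some
  unspecified number, which is harmless.\<close>

primrec stage :: "nat \<Rightarrow> 'x word \<times> 'x word set set \<times> 'x word set set" where
  "stage 0 = ([], {A}, {})"
| "stage (Suc k) = next_stage k (stage k)"

definition seq :: "nat \<Rightarrow> 'x word" where
  "seq k = fst (stage (Suc k))"

definition fams :: "nat \<Rightarrow> 'x word set set" where
  "fams k = fst (snd (stage k))"

definition fams' :: "nat \<Rightarrow> 'x word set set" where
  "fams' k = snd (snd (stage k))"

definition stage_invariant :: "nat \<Rightarrow> bool" where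
  "stage_invariant k \<longleftrightarrow> finite (fams k) \<and> finite (fams' k) \<and> fams k \<subseteq> F
     \<and> (\<forall>T\<in>fams' k. \<forall>b\<in>B. T \<in> uact b U' \<odot> F)"

lemma refined_mem:
  assumes "S \<in> F"
  shows "refined S \<in> F"
proof -
  have uF: "ultrafilter F" using cofinal_ultrafilter[OF F] .
  have "{z. left_quotient X S z \<in> uact b U' \<odot> F} \<in> F" if "b \<in> B" for b
  proof -
    have "S \<in> F \<odot> (uact b U' \<odot> F)" using uact_U'[OF that] assms by simp
    then show ?thesis by (simp only: uprod_def[of F] mem_Collect_eq)
  qed
  then have "(\<Inter>b\<in>B. {z. left_quotient X S z \<in> uact b U' \<odot> F}) \<in> F"
    by (rule ultrafilter_INT[OF uF finite_B])
  then have "S \<inter> (\<Inter>b\<in>B. {z. left_quotient X S z \<in> uact b U' \<odot> F}) \<in> F"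
    by (rule ultrafilter_Int[OF uF assms])
  moreover have "S \<inter> (\<Inter>b\<in>B. {z. left_quotient X S z \<in> uact b U' \<odot> F}) = refined S"
    unfolding refined_def by blast
  ultimately show ?thesis by simp
qed

lemma good_v_exists:
  assumes "finite \<F>" "\<F> \<subseteq> F"
  shows "\<exists>x. good_v N \<F> x"
proof -
  have uU: "ultrafilter U" using cofinal_ultrafilter[OF U] .
  have "(\<Inter>(b, S)\<in>B \<times> \<F>. bact b -` refined S) \<in> U"
  proof (rule ultrafilter_INT[OF uU])
    show "finite (B \<times> \<F>)" using finite_B assms(1) by blast
    fix bS assume "bS \<in> B \<times> \<F>"
    then obtain b S where "bS = (b, S)" "b \<in> B" "S \<in> F" using assms(2) by blast
    then show "(case bS of (b, S) \<Rightarrow> bact b -` refined S) \<in> U"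
      using refined_mem uact_U unfolding uact_def by auto
  qed
  then have "pointed_words \<inter> tail N \<inter> (\<Inter>(b, S)\<in>B \<times> \<F>. bact b -` refined S) \<in> U"
    using ultrafilter_Int[OF uU ultrafilter_Int[OF uU pointed_words_U tail_mem_cofinal[OF U]]] by blast
  then obtain x where "x \<in> pointed_words \<inter> tail N \<inter> (\<Inter>(b, S)\<in>B \<times> \<F>. bact b -` refined S)"
    using ultrafilter_nonempty[OF uU] by blast
  then have "good_v N \<F> x" unfolding good_v_def by auto
  then show ?thesis ..
qed

lemma good_v'_exists:
  assumes "finite \<G>" "\<forall>T\<in>\<G>. \<forall>b\<in>B. T \<in> uact b U' \<odot> F"
  shows "\<exists>y. good_v' N \<G> y"
proof -
  have uU': "ultrafilter U'" using cofinal_ultrafilter[OF U'] .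
  have "(\<Inter>(b, T)\<in>B \<times> \<G>. bact b -` {z. left_quotient X T z \<in> F}) \<in> U'"
  proof (rule ultrafilter_INT[OF uU'])
    show "finite (B \<times> \<G>)" using finite_B assms(1) by blast
    fix bT assume "bT \<in> B \<times> \<G>"
    then obtain b T where "bT = (b, T)" "T \<in> uact b U' \<odot> F" using assms(2) by blast
    then show "(case bT of (b, T) \<Rightarrow> bact b -` {z. left_quotient X T z \<in> F}) \<in> U'"
      unfolding uprod_def uact_def by simp
  qed
  then have "E \<inter> tail N \<inter> (\<Inter>(b, T)\<in>B \<times> \<G>. bact b -` {z. left_quotient X T z \<in> F}) \<in> U'"
    using ultrafilter_Int[OF uU' ultrafilter_Int[OF uU' E_U' tail_mem_cofinal[OF U']]] by blast
  then obtain y where "y \<in> E \<inter> tail N \<inter> (\<Inter>(b, T)\<in>B \<times> \<G>. bact b -` {z. left_quotient X T z \<in> F})"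
    using ultrafilter_nonempty[OF uU'] by blast
  then have "good_v' N \<G> y" unfolding good_v'_def by auto
  then show ?thesis ..
qed

lemma stage_Suc_even:
  assumes "even k" "stage_invariant k"
  shows "good_v (fst (last (fst (stage k)))) (fams k) (seq k)" "fams (Suc k) = fams k"
    "fams' (Suc k) = fams' k \<union> (\<lambda>(S, b). left_quotient X S (bact b (seq k))) ` (fams k \<times> B)"
    "fst (stage (Suc k)) = seq k"
proof -
  obtain w \<F> \<G> where k: "stage k = (w, \<F>, \<G>)" by (cases "stage k")
  have "\<exists>x. good_v (fst (last w)) \<F> x"
    using good_v_exists assms(2) k unfolding stage_invariant_def fams_def by simp
  then have "good_v (fst (last w)) \<F> (SOME x. good_v (fst (last w)) \<F> x)" by (rule someI_ex)
  then show "good_v (fst (last (fst (stage k)))) (fams k) (seq k)" "fams (Suc k) = fams k"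
    "fams' (Suc k) = fams' k \<union> (\<lambda>(S, b). left_quotient X S (bact b (seq k))) ` (fams k \<times> B)"
    "fst (stage (Suc k)) = seq k"
    using assms(1) k by (simp_all add: next_stage_def seq_def fams_def fams'_def Let_def)
qed

lemma stage_Suc_odd:
  assumes "odd k" "stage_invariant k"
  shows "good_v' (fst (last (fst (stage k)))) (fams' k) (seq k)" "fams' (Suc k) = fams' k"
    "fams (Suc k) = fams k \<union> (\<lambda>(T, b). left_quotient X T (bact b (seq k))) ` (fams' k \<times> B)"
    "fst (stage (Suc k)) = seq k"
proof -
  obtain w \<F> \<G> where k: "stage k = (w, \<F>, \<G>)" by (cases "stage k")
  have "\<exists>y. good_v' (fst (last w)) \<G> y"
    using good_v'_exists assms(2) k unfolding stage_invariant_def fams'_def by simp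
  then have "good_v' (fst (last w)) \<G> (SOME y. good_v' (fst (last w)) \<G> y)" by (rule someI_ex)
  then show "good_v' (fst (last (fst (stage k)))) (fams' k) (seq k)" "fams' (Suc k) = fams' k"
    "fams (Suc k) = fams k \<union> (\<lambda>(T, b). left_quotient X T (bact b (seq k))) ` (fams' k \<times> B)"
    "fst (stage (Suc k)) = seq k"
    using assms(1) k by (simp_all add: next_stage_def seq_def fams_def fams'_def Let_def)
qed

lemma stage_invariant: "stage_invariant k"
proof (induction k)
  case 0
  show ?case using A_F unfolding stage_invariant_def fams_def fams'_def by simp
next
  case (Suc k)
  show ?case
  proof (cases "even k")
    case True
    note s = stage_Suc_even[OF True Suc.IH]
    have "\<forall>b\<in>B. \<forall>S\<in>fams k. bact b (seq k) \<in> refined S" using s(1) unfolding good_v_def by blast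
    then have "\<forall>T\<in>(\<lambda>(S, b). left_quotient X S (bact b (seq k))) ` (fams k \<times> B). \<forall>b'\<in>B. T \<in> uact b' U' \<odot> F"
      unfolding refined_def by auto
    then show ?thesis using Suc.IH s(2,3) finite_B unfolding stage_invariant_def by auto
  next
    case False
    note s = stage_Suc_odd[OF False Suc.IH]
    have "\<forall>b\<in>B. \<forall>T\<in>fams' k. left_quotient X T (bact b (seq k)) \<in> F" using s(1) unfolding good_v'_def by blast
    then show ?thesis using Suc.IH s(2,3) finite_B unfolding stage_invariant_def by auto
  qed
qed

lemma fams_Suc: "fams k \<subseteq> fams (Suc k) \<and> fams' k \<subseteq> fams' (Suc k)"
  by (cases "even k") (auto simp: stage_Suc_even[OF _ stage_invariant] stage_Suc_odd[OF _ stage_invariant])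

lemma fams_mono: "i \<le> j \<Longrightarrow> fams i \<subseteq> fams j"
  by (rule lift_Suc_mono_le[of fams]) (use fams_Suc in auto)

lemma fams'_mono: "i \<le> j \<Longrightarrow> fams' i \<subseteq> fams' j"
  by (rule lift_Suc_mono_le[of fams']) (use fams_Suc in auto)

lemma A_mem_fams: "A \<in> fams k"
  using fams_mono[of 0 k] unfolding fams_def by simp

lemma seq_tail: "seq k \<in> tail (fst (last (fst (stage k))))"
  using stage_Suc_even(1)[OF _ stage_invariant, of k] stage_Suc_odd(1)[OF _ stage_invariant, of k]
  unfolding good_v_def good_v'_def by (cases "even k") auto

lemma seq_FIN: "seq k \<in> FIN X"
  using seq_tail tail_subset_FIN by blast

lemma seq_chain: "fst (last (seq k)) < fst (hd (seq (Suc k)))"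
proof -
  have "fst (stage (Suc k)) = seq k"
    using stage_Suc_even(4)[OF _ stage_invariant] stage_Suc_odd(4)[OF _ stage_invariant] by blast
  then show ?thesis using seq_tail[of "Suc k"] unfolding tail_def by simp
qed

lemma seq_less: "k < k' \<Longrightarrow> fst (last (seq k)) < fst (hd (seq k'))"
proof (induction k')
  case (Suc k')
  show ?case
  proof (cases "k = k'")
    case False
    then have "fst (last (seq k)) < fst (hd (seq k'))" using Suc by simp
    also have "\<dots> \<le> fst (last (seq k'))" using FIN_hd_le_last[OF seq_FIN] .
    also have "\<dots> < fst (hd (seq (Suc k')))" using seq_chain .
    finally show ?thesis .
  qed (use seq_chain in simp)
qed simp

lemma basic_seq: "basic X seq"
  unfolding basic_def
proof (intro allI impI)
  fix ks :: "nat list" assume ks: "ks \<noteq> [] \<and> sorted_wrt (<) ks"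
  then have "sorted_wrt (\<lambda>a b. fst (last a) < fst (hd b)) (map seq ks)"
    using seq_less unfolding sorted_wrt_map by (metis (mono_tags, lifting) sorted_wrt_mono_rel)
  then show "prodl X (map seq ks) \<noteq> None" using prodl_concat[of "map seq ks" X] seq_FIN ks by auto
qed

definition v :: "nat \<Rightarrow> 'x word" where
  "v i = seq (2 * i)"

definition v' :: "nat \<Rightarrow> 'x word" where
  "v' i = seq (2 * i + 1)"

lemma interleave_v_v': "interleave v v' = seq"
proof
  fix k
  show "interleave v v' k = seq k"
    unfolding interleave_def v_def v'_def by (cases "even k") (simp_all add: odd_two_times_div_two_succ)
qed

lemma v_pointed: "\<exists>m. (m, p m) \<in> set (v i)"
  using stage_Suc_even(1)[OF _ stage_invariant, of "2 * i"] unfolding good_v_def pointed_words_def v_def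
  by simp

lemma v'_mem_E: "v' i \<in> E"
  using stage_Suc_odd(1)[OF _ stage_invariant, of "2 * i + 1"] unfolding good_v'_def v'_def by simp

lemma v_step:
  assumes "S \<in> fams (2 * i)" "b \<in> B"
  shows "bact b (v i) \<in> refined S" "left_quotient X S (bact b (v i)) \<in> fams' (Suc (2 * i))"
proof -
  have "even (2 * i)" by simp
  note s = stage_Suc_even[OF this stage_invariant]
  show "bact b (v i) \<in> refined S" using s(1) assms unfolding good_v_def v_def by blast
  have "(\<lambda>(S, b). left_quotient X S (bact b (seq (2 * i)))) (S, b)
      \<in> (\<lambda>(S, b). left_quotient X S (bact b (seq (2 * i)))) ` (fams (2 * i) \<times> B)"
    using assms by (intro imageI) blast
  then show "left_quotient X S (bact b (v i)) \<in> fams' (Suc (2 * i))"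
    unfolding s(3) v_def by simp
qed

lemma v'_step:
  assumes "T \<in> fams' (2 * j + 1)" "b \<in> B"
  shows "left_quotient X T (bact b (v' j)) \<in> fams (Suc (2 * j + 1))"
proof -
  have "odd (2 * j + 1)" by simp
  note s = stage_Suc_odd[OF this stage_invariant]
  have "(\<lambda>(T, b). left_quotient X T (bact b (seq (2 * j + 1)))) (T, b)
      \<in> (\<lambda>(T, b). left_quotient X T (bact b (seq (2 * j + 1)))) ` (fams' (2 * j + 1) \<times> B)"
    using assms by (intro imageI) blast
  then show ?thesis unfolding s(3) v'_def by simp
qed

lemma pattern_word_mem:
  assumes "\<forall>k\<le>n. bs k \<in> B" "\<forall>k<n. bs' k \<in> B" "\<forall>k<n. is k \<le> js k \<and> js k < is (Suc k)"
  shows "pattern_word act v v' n is js bs bs' \<in> A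
    \<and> left_quotient X A (pattern_word act v v' n is js bs bs') \<in> fams' (Suc (2 * is n))"
  using assms
proof (induction n)
  case 0
  have "bs 0 \<in> B" using "0.prems"(1) by simp
  then show ?case
    using v_step[OF A_mem_fams] unfolding pattern_word_0 refined_def by blast
next
  case (Suc n)
  let ?P = "pattern_word act v v' n is js bs bs'"
  let ?z = "bact (bs' n) (v' (js n))" and ?x = "bact (bs (Suc n)) (v (is (Suc n)))"
  let ?T = "left_quotient X (left_quotient X A ?P) ?z"
  have IH: "?P \<in> A" "left_quotient X A ?P \<in> fams' (Suc (2 * is n))" using Suc by auto
  have b: "bs (Suc n) \<in> B" and b': "bs' n \<in> B" using Suc.prems(1,2) by auto
  have ij: "Suc (2 * is n) \<le> 2 * js n + 1" "Suc (2 * js n + 1) \<le> 2 * is (Suc n)"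
    using Suc.prems(3) by auto
  have "left_quotient X A ?P \<in> fams' (2 * js n + 1)" using fams'_mono[OF ij(1)] IH(2) by blast
  then have T: "?T \<in> fams (2 * is (Suc n))" using fams_mono[OF ij(2)] v'_step b' by blast
  then have "?x \<in> refined ?T" using v_step(1) b by blast
  then have "?x \<in> ?T" unfolding refined_def by blast
  then have zx: "pdefined X ?z ?x" and Pzx: "pdefined X ?P (?z @ ?x)" "?P @ (?z @ ?x) \<in> A"
    unfolding left_quotient_def by auto
  have "left_quotient X ?T ?x = left_quotient X A (?P @ (?z @ ?x))"
    using left_quotient_left_quotient[of X "left_quotient X A ?P" ?z ?x]
      left_quotient_left_quotient[of X A ?P "?z @ ?x"] zx Pzx(1) by simp
  then show ?case using v_step(2)[OF T b] Pzx(2) unfolding pattern_word_Suc by simp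
qed

lemma monochromatic_double_sequence_exists:
  fixes c :: "'x word \<Rightarrow> 'c"
  assumes "\<And>w. w \<in> A \<Longrightarrow> c w = col"
  shows "\<exists>v v'. basic_double X v v' \<and> (\<forall>i. \<exists>m. (m, p m) \<in> set (v i)) \<and> (\<forall>i. v' i \<in> E)
     \<and> (\<exists>col. \<forall>n is js bs bs'. (\<forall>k\<le>n. bs k \<in> B) \<and> (\<forall>k<n. bs' k \<in> B)
           \<and> (\<forall>k<n. is k \<le> js k \<and> js k < is (Suc k))
           \<longrightarrow> c (pattern_word act v v' n is js bs bs') = col)"
proof -
  have "basic_double X v v'" unfolding basic_double_def interleave_v_v' by (rule basic_seq)
  moreover have "\<forall>n is js bs bs'. (\<forall>k\<le>n. bs k \<in> B) \<and> (\<forall>k<n. bs' k \<in> B)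
      \<and> (\<forall>k<n. is k \<le> js k \<and> js k < is (Suc k)) \<longrightarrow> c (pattern_word act v v' n is js bs bs') = col"
    using pattern_word_mem assms by (intro allI impI) (elim conjE, blast)
  then have "\<exists>col. \<forall>n is js bs bs'. (\<forall>k\<le>n. bs k \<in> B) \<and> (\<forall>k<n. bs' k \<in> B)
      \<and> (\<forall>k<n. is k \<le> js k \<and> js k < is (Suc k)) \<longrightarrow> c (pattern_word act v v' n is js bs bs') = col"
    by (rule exI)
  ultimately show ?thesis using v_pointed v'_mem_E by (intro exI[of _ v] exI[of _ v']) simp
qed

end

theorem corollary4p4:
  fixes B :: "'b set"
    and X :: "nat \<Rightarrow> 'x set"
    and act :: "nat \<Rightarrow> 'b option \<Rightarrow> 'x \<Rightarrow> 'x"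
    and p :: "nat \<Rightarrow> 'x"
    and E :: "'x word set"
    and c :: "'x word \<Rightarrow> nat"
    and r :: nat
  assumes "finite B"
    and "\<And>n. pointed_J_set B (X n) (act n) (p n)"
    and "right_ideal X E"
    and "E_directed X E"
    and "\<And>w. w \<in> FIN X \<Longrightarrow> c w < r"
  shows "\<exists>v v'. basic_double X v v'
     \<and> (\<forall>i. \<exists>m. (m, p m) \<in> set (v i))
     \<and> (\<forall>i. v' i \<in> E)
     \<and> (\<exists>col. \<forall>n is js bs bs'.
           (\<forall>k\<le>n. bs k \<in> B) \<and> (\<forall>k<n. bs' k \<in> B)
           \<and> (\<forall>k<n. is k \<le> js k \<and> js k < is (Suc k))
           \<longrightarrow> c (pattern_word act v v' n is js bs bs') = col)"
proof -
  interpret J: pointed_J_sets B X act p E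
    using assms(1-4) by unfold_locales
  show ?thesis
  proof (rule J.key_ultrafilters_exist)
    fix F U U' assume FUU': "F \<in> J.cofinal" "U \<in> J.cofinal" "U' \<in> J.cofinal"
      "J.pointed_words \<in> U" "E \<in> U'" "\<And>b. b \<in> B \<Longrightarrow> J.uact b U = F"
      "\<And>b. b \<in> B \<Longrightarrow> J.uprod F (J.uprod (J.uact b U') F) = F"
    have uF: "ultrafilter F" using J.cofinal_ultrafilter[OF FUU'(1)] .
    obtain col where "{w \<in> FIN X. c w = col} \<in> F"
      using ultrafilter_finite_colouring[OF uF J.FIN_mem_cofinal[OF FUU'(1)], of c r] assms(5) by blast
    then interpret C: pattern_construction B X act p E F U U' "{w \<in> FIN X. c w = col}"
      using FUU' by unfold_locales auto
    show ?thesis by (rule C.monochromatic_double_sequence_exists) simp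
  qed
qed

end
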